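(* Let $M\ge1$, let $\tau=(c,c,\ldots,c)\in\mathbb{R}^{M+1}_{>0}$ be a constant $M$-layer travel time vector and $\tau'=(c,\ldots,c)\in\mathbb{R}^{M+2}_{>0}$ its extension to a constant $(M+1)$-layer vector. Let $\mathcal{R}\subset(-1,1)^{M+1}$ be the set of all $R=(R_0,\ldots,R_M)$ for which there exists a nonzero $R_{M+1}\in(-1,1)$ such that, with $R'=(R_0,\ldots,R_{M+1})$, the models $(\tau,R)$ and $(\tau',R')$ have the same data, i.e. $D^{(\tau,R)}=D^{(\tau',R')}$ as measures. Then $\mathcal{R}$ has positive Lebesgue measure in $\mathbb{R}^{M+1}$.
   Context: An $N$-layer model ($N\ge1$) is $(\tau,R)$ with $\tau\in\mathbb{R}^{N+1}_{>0}$, $R\in(-1,1)^{N+1}$. $\mathfrak{L}_N\subset\mathbb{Z}^{N+1}_{\geq0}$: all $k$ with $k_0=1$ and $k_n>0\Rightarrow k_{n-1}>0$ ($1\le n\le N$); $\mathfrak{L}^\tau_N=\{k\in\mathfrak{L}_N:\langle k,\tau\rangle\le\langle\mathbb{1},\tau\rangle\}$. Amplitude polynomial: $\mathbb{1}=(1,\ldots,1)$; inequalities and $\min$ entrywise; $x^k=\prod_n x_n^{k_n}$, $\binom{k}{b}=\prod_n\binom{k_n}{b_n}$; $\tilde k=(k_1,\ldots,k_N,0)$, $u=\min\{\mathbb{1},\tilde k\}$, $V(k)=\{b:u\le b\le\min\{k,\tilde k\}\}$, $a(x,k)=\sum_{b\in V(k)}\binom{k}{b}\binom{\tilde k-u}{b-u}(-x)^{\tilde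 k-b}x^{k-b}\prod_n(1-x_n^2)^{b_n}$. The data of an $N$-layer model is the discrete measure $D^{(\tau,R)}(t)=\sum_{k\in\mathfrak{L}^\tau_N}a(R,k)\delta(t-\langle k,\tau\rangle)$ (equal to the truncated impulse response $\chi_{[0,|\tau|]}G^{(\tau,R)}$ of the layered medium, $|\tau|=\sum_n\tau_n$). *)

theory Defs
  imports "HOL-Analysis.Analysis"
begin

text \<open>Vectors in R^{N+1} / Z^{N+1} are represented as functions on nat; only the
indices 0..N are relevant. Integer index vectors k are required to vanish above N.\<close>

definition layer_set :: "nat \<Rightarrow> (nat \<Rightarrow> nat) set" where
  "layer_set N = {k. k 0 = 1 \<and> (\<forall>n. 1 \<le> n \<and> n \<le> N \<and> 0 < k n \<longrightarrow> 0 < k (n - 1))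
                     \<and> (\<forall>n>N. k n = 0)}"

definition ipk :: "nat \<Rightarrow> (nat \<Rightarrow> nat) \<Rightarrow> (nat \<Rightarrow> real) \<Rightarrow> real" where
  "ipk N k \<tau> = (\<Sum>n\<le>N. real (k n) * \<tau> n)"

definition layer_set_tau :: "nat \<Rightarrow> (nat \<Rightarrow> real) \<Rightarrow> (nat \<Rightarrow> nat) set" where
  "layer_set_tau N \<tau> = {k \<in> layer_set N. ipk N k \<tau> \<le> (\<Sum>n\<le>N. \<tau> n)}"

definition ktil :: "nat \<Rightarrow> (nat \<Rightarrow> nat) \<Rightarrow> nat \<Rightarrow> nat" where
  "ktil N k n = (if n < N then k (Suc n) else 0)"

definition uvec :: "nat \<Rightarrow> (nat \<Rightarrow> nat) \<Rightarrow> nat \<Rightarrow> nat" where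
  "uvec N k n = min 1 (ktil N k n)"

definition Vset :: "nat \<Rightarrow> (nat \<Rightarrow> nat) \<Rightarrow> (nat \<Rightarrow> nat) set" where
  "Vset N k = {b. (\<forall>n\<le>N. uvec N k n \<le> b n \<and> b n \<le> min (k n) (ktil N k n)) \<and> (\<forall>n>N. b n = 0)}"

definition amp :: "nat \<Rightarrow> (nat \<Rightarrow> real) \<Rightarrow> (nat \<Rightarrow> nat) \<Rightarrow> real" where
  "amp N x k = (\<Sum>b\<in>Vset N k. \<Prod>n\<le>N.
      real (k n choose b n) * real ((ktil N k n - uvec N k n) choose (b n - uvec N k n))
      * (- x n) ^ (ktil N k n - b n) * x n ^ (k n - b n) * (1 - (x n)\<^sup>2) ^ (b n))"

text \<open>The data D^(tau,R) of an N-layer model, a finite discrete measure, represented by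
its weight function: the mass at time t.\<close>

definition model_data :: "nat \<Rightarrow> (nat \<Rightarrow> real) \<Rightarrow> (nat \<Rightarrow> real) \<Rightarrow> real \<Rightarrow> real" where
  "model_data N \<tau> R t = (\<Sum>k\<in>{k \<in> layer_set_tau N \<tau>. ipk N k \<tau> = t}. amp N R k)"

end

theory Submission
  imports Defs
begin

(* With constant travel times tau = (c,...,c) an index vector k arrives at time
   c * |k|, |k| = k_0 + ... + k_N, and the N-layer data records only arrivals with |k| <= N + 1.
   Extending an M-layer model R by a layer with coefficient r changes nothing before the time
   c(M+2): those paths never enter layer M + 1 and their amplitudes ignore r.  At c(M+2) the
   M-layer data vanishes while the extended data equals r * P(R) + g(R), where P(R) is the
   transmission product prod (1 - R_n^2) of the all-ones path and g(R) is the total amplitude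
   of the M-layer "late paths" with |k| = M + 2.  So R belongs to the set of the theorem iff
   |R_n| < 1 for n <= M and 0 < |g(R)| < P(R).  This condition is open and Borel measurable,
   and it holds at R = (1/2, 1/2, 0, ..., 0), where a single late path has nonzero amplitude;
   a measurable set containing a nonempty open set has positive product Lebesgue measure. *)


section \<open>Layer index vectors\<close>

lemma layer_set_pos_below:
  assumes "k \<in> layer_set N" "n \<le> N" "0 < k n" "m \<le> n"
  shows "0 < k m"
  using assms(2-4)
proof (induction n)
  case 0
  then show ?case by simp
next
  case (Suc n)
  have "\<forall>n. 1 \<le> n \<and> n \<le> N \<and> 0 < k n \<longrightarrow> 0 < k (n - 1)"
    using assms(1) unfolding layer_set_def by blast
  then have "0 < k n" using Suc.prems by (metis diff_Suc_1 le_add1 plus_1_eq_Suc)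
  then show ?case
    using Suc by (cases "m = Suc n") auto
qed

(* The total order |k| of an index vector; with constant travel time c the arrival time is c*|k|. *)
definition ksum :: "nat \<Rightarrow> (nat \<Rightarrow> nat) \<Rightarrow> nat" where
  "ksum N k = (\<Sum>n\<le>N. k n)"

lemma ksum_Suc: "ksum (Suc M) k = ksum M k + k (Suc M)"
  unfolding ksum_def by simp

definition ones :: "nat \<Rightarrow> nat \<Rightarrow> nat" where
  "ones N = (\<lambda>n. if n \<le> N then 1 else 0)"

lemma ones_layer_set: "ones N \<in> layer_set N"
  unfolding layer_set_def ones_def by auto

lemma ksum_ones: "ksum N (ones N) = N + 1"
  unfolding ksum_def ones_def by simp

lemma layer_set_bottom_ksum:
  assumes "k \<in> layer_set N" "0 < k N"
  shows "N + 1 \<le> ksum N k" and "ksum N k = N + 1 \<Longrightarrow> k = ones N"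
proof -
  have pos: "\<And>n. n \<le> N \<Longrightarrow> 0 < k n"
    using layer_set_pos_below[OF assms(1) order_refl assms(2)] by blast
  have split: "ksum N k = (N + 1) + (\<Sum>n\<le>N. k n - 1)"
  proof -
    have "ksum N k = (\<Sum>n\<le>N. 1 + (k n - 1))"
      unfolding ksum_def by (rule sum.cong) (use pos in auto)
    also have "\<dots> = (\<Sum>n\<le>N. (1::nat)) + (\<Sum>n\<le>N. k n - 1)"
      by (rule sum.distrib)
    finally show ?thesis by simp
  qed
  then show "N + 1 \<le> ksum N k" by simp
  assume "ksum N k = N + 1"
  then have "\<forall>n\<le>N. k n \<le> 1" using split by simp
  then have "\<And>n. n \<le> N \<Longrightarrow> k n = 1" using pos by (simp add: le_antisym Suc_leI)
  moreover have "\<And>n. N < n \<Longrightarrow> k n = 0" using assms(1) unfolding layer_set_def by blast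
  ultimately show "k = ones N" by (auto simp: ones_def fun_eq_iff not_le)
qed

lemma layer_set_Suc_last_zero:
  "k \<in> layer_set (Suc M) \<and> k (Suc M) = 0 \<longleftrightarrow> k \<in> layer_set M"
proof
  assume k: "k \<in> layer_set (Suc M) \<and> k (Suc M) = 0"
  have "k n = 0" if "M < n" for n
  proof (cases "n = Suc M")
    case True
    then show ?thesis using k by simp
  next
    case False
    then have "Suc M < n" using that by simp
    then show ?thesis using k unfolding layer_set_def by blast
  qed
  then show "k \<in> layer_set M" using k unfolding layer_set_def by auto
next
  assume "k \<in> layer_set M"
  then show "k \<in> layer_set (Suc M) \<and> k (Suc M) = 0"
    unfolding layer_set_def by (auto simp: le_Suc_eq)
qed

lemma finite_layer_set_ksum_le: "finite {k \<in> layer_set N. ksum N k \<le> B}"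
proof (rule finite_subset)
  show "{k \<in> layer_set N. ksum N k \<le> B} \<subseteq>
        {f. \<forall>n. (n \<in> {..N} \<longrightarrow> f n \<in> {..B}) \<and> (n \<notin> {..N} \<longrightarrow> f n = 0)}"
  proof -
    have "k n \<le> B" if "ksum N k \<le> B" "n \<le> N" for k :: "nat \<Rightarrow> nat" and n
      using member_le_sum[of n "{..N}" k] that by (simp add: ksum_def)
    moreover have "k n = 0" if "k \<in> layer_set N" "N < n" for k n
      using that unfolding layer_set_def by simp
    ultimately show ?thesis by auto
  qed
qed (rule finite_set_of_finite_funs; simp)


section \<open>Data of models with constant travel times\<close>

lemma model_data_const:
  assumes "0 < c"
  shows "model_data N (\<lambda>_. c) R t =
         (\<Sum>k\<in>{k \<in> layer_set N. ksum N k \<le> N + 1 \<and> c * real (ksum N k) = t}. amp N R k)"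
proof -
  have ipk: "ipk N k (\<lambda>_. c) = c * real (ksum N k)" for k
    unfolding ipk_def ksum_def by (simp add: sum_distrib_left mult.commute)
  have "c * real S \<le> (\<Sum>n\<le>N. c) \<longleftrightarrow> S \<le> N + 1" for S
    using assms by (simp del: of_nat_Suc add: mult.commute)
  then show ?thesis
    unfolding model_data_def layer_set_tau_def ipk by (intro sum.cong) auto
qed


lemma amp_cong: "(\<And>n. n \<le> N \<Longrightarrow> R n = R' n) \<Longrightarrow> amp N R k = amp N R' k"
  unfolding amp_def by (intro sum.cong refl prod.cong) auto

lemma amp_extend:
  assumes "k (Suc M) = 0"
  shows "amp (Suc M) (R(Suc M := r)) k = amp M R k"
proof -
  have kt: "ktil (Suc M) k = ktil M k"
    using assms by (auto simp: ktil_def fun_eq_iff less_Suc_eq)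
  have uv: "uvec (Suc M) k = uvec M k" unfolding uvec_def kt ..
  have kt0: "\<And>n. M \<le> n \<Longrightarrow> ktil M k n = 0" by (simp add: ktil_def)
  have V: "Vset (Suc M) k = Vset M k"
  proof (rule set_eqI)
    fix b
    show "b \<in> Vset (Suc M) k \<longleftrightarrow> b \<in> Vset M k"
      unfolding Vset_def uv kt mem_Collect_eq
    proof safe
      fix n assume h: "\<forall>n\<le>Suc M. uvec M k n \<le> b n \<and> b n \<le> min (k n) (ktil M k n)"
        "\<forall>n>Suc M. b n = 0" "M < n"
      show "b n = 0"
        using h kt0[of n] by (cases "n = Suc M") auto
    next
      fix n assume h: "\<forall>n\<le>M. uvec M k n \<le> b n \<and> b n \<le> min (k n) (ktil M k n)"
        "\<forall>n>M. b n = 0" "n \<le> Suc M"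
      show "uvec M k n \<le> b n" "b n \<le> min (k n) (ktil M k n)"
        using h kt0[of n] by (auto simp: le_Suc_eq uvec_def)
    qed auto
  qed
  show ?thesis
    unfolding amp_def kt uv V
  proof (rule sum.cong[OF refl])
    fix b assume "b \<in> Vset M k"
    then have b0: "b (Suc M) = 0" unfolding Vset_def by auto
    have u0: "uvec M k (Suc M) = 0" by (simp add: uvec_def ktil_def)
    show "(\<Prod>n\<le>Suc M. real (k n choose b n) * real ((ktil M k n - uvec M k n) choose (b n - uvec M k n)) *
          (- (R(Suc M := r)) n) ^ (ktil M k n - b n) * (R(Suc M := r)) n ^ (k n - b n) *
          (1 - ((R(Suc M := r)) n)\<^sup>2) ^ b n) =
          (\<Prod>n\<le>M. real (k n choose b n) * real ((ktil M k n - uvec M k n) choose (b n - uvec M k n)) *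
          (- R n) ^ (ktil M k n - b n) * R n ^ (k n - b n) * (1 - (R n)\<^sup>2) ^ b n)"
      by (simp add: b0 u0 kt0 assms)
  qed
qed

lemma amp_ones: "amp (Suc M) x (ones (Suc M)) = (\<Prod>n\<le>M. 1 - (x n)\<^sup>2) * x (Suc M)"
proof -
  have kt: "ktil (Suc M) (ones (Suc M)) = ones M" by (auto simp: ktil_def ones_def fun_eq_iff)
  have uv: "uvec (Suc M) (ones (Suc M)) = ones M" unfolding uvec_def kt by (auto simp: ones_def)
  have V: "Vset (Suc M) (ones (Suc M)) = {ones M}"
  proof (rule set_eqI)
    fix b
    have "b = ones M"
      if "\<forall>n\<le>Suc M. ones M n \<le> b n \<and> b n \<le> min (ones (Suc M) n) (ones M n)" "\<forall>n>Suc M. b n = 0"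
    proof
      fix n show "b n = ones M n"
        using that by (cases "n \<le> Suc M") (auto simp: ones_def intro: antisym)
    qed
    then show "b \<in> Vset (Suc M) (ones (Suc M)) \<longleftrightarrow> b \<in> {ones M}"
      unfolding Vset_def kt uv by (auto simp: ones_def)
  qed
  show ?thesis
    unfolding amp_def kt uv V by (simp add: ones_def)
qed

definition kstar :: "nat \<Rightarrow> nat \<Rightarrow> nat" where
  "kstar M = (\<lambda>n. if n = 0 then 1 else if n = 1 then M + 1 else 0)"

lemma amp_kstar:
  assumes "1 \<le> M"
  shows "amp M x (kstar M) = (- x 0) ^ M * (1 - (x 0)\<^sup>2) * x 1 ^ (M + 1)"
proof -
  define e0 where "e0 = (\<lambda>n::nat. if n = 0 then 1 else (0::nat))"
  have kt: "ktil M (kstar M) = (\<lambda>n. if n = 0 then M + 1 else 0)"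
    using assms by (auto simp: ktil_def kstar_def fun_eq_iff)
  have uv: "uvec M (kstar M) = e0" by (auto simp: uvec_def kt e0_def fun_eq_iff)
  have V: "Vset M (kstar M) = {e0}"
  proof (rule set_eqI)
    fix b
    have "b = e0"
      if "\<forall>n\<le>M. e0 n \<le> b n \<and> b n \<le> min (kstar M n) (if n = 0 then M + 1 else 0)" "\<forall>n>M. b n = 0"
    proof
      fix n show "b n = e0 n"
        using that by (cases "n \<le> M"; cases "n = 0") (auto simp: e0_def kstar_def)
    qed
    then show "b \<in> Vset M (kstar M) \<longleftrightarrow> b \<in> {e0}"
      unfolding Vset_def kt uv by (auto simp: e0_def kstar_def)
  qed
  define f where "f = (\<lambda>n. real (kstar M n choose e0 n) *
          real (((if n = 0 then M + 1 else 0) - e0 n) choose (e0 n - e0 n)) *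
          (- x n) ^ ((if n = 0 then M + 1 else 0) - e0 n) * x n ^ (kstar M n - e0 n) *
          (1 - (x n)\<^sup>2) ^ e0 n)"
  have "amp M x (kstar M) = prod f {..M}"
    unfolding amp_def kt uv V f_def by simp
  also have "\<dots> = prod f {0, 1}"
    by (rule prod.mono_neutral_right) (use assms in \<open>auto simp: f_def kstar_def e0_def\<close>)
  also have "\<dots> = (- x 0) ^ M * (1 - (x 0)\<^sup>2) * x 1 ^ (M + 1)"
    by (simp add: f_def kstar_def e0_def)
  finally show ?thesis .
qed

(* A path turning back at a layer m with zero reflection coefficient has zero amplitude:
   every summand contains the factor x_m ^ k_m. *)
lemma amp_zero_at_turning_layer:
  assumes "m \<le> N" "0 < k m" "ktil N k m = 0" "x m = 0"
  shows "amp N x k = 0"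
  unfolding amp_def
proof (intro sum.neutral ballI)
  fix b assume "b \<in> Vset N k"
  then have "b m \<le> min (k m) (ktil N k m)" using assms(1) unfolding Vset_def by blast
  then have "x m ^ (k m - b m) = 0" using assms(2-4) by simp
  then show "(\<Prod>n\<le>N. real (k n choose b n) * real ((ktil N k n - uvec N k n) choose (b n - uvec N k n)) *
          (- x n) ^ (ktil N k n - b n) * x n ^ (k n - b n) * (1 - (x n)\<^sup>2) ^ b n) = 0"
    by (intro prod_zero finite_atMost bexI[of _ m]) (simp_all add: assms(1))
qed


section \<open>Comparing the data of a model and of its one-layer extension\<close>

(* The M-layer paths of order M + 2: they arrive just after the truncation time of the
   M-layer data, at the same time as the all-ones path of the extended model. *)
definition late_paths :: "nat \<Rightarrow> (nat \<Rightarrow> nat) set" where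
  "late_paths M = {k \<in> layer_set M. ksum M k = M + 2}"

definition late_amplitude :: "nat \<Rightarrow> (nat \<Rightarrow> real) \<Rightarrow> real" where
  "late_amplitude M R = (\<Sum>k\<in>late_paths M. amp M R k)"

definition transmission :: "nat \<Rightarrow> (nat \<Rightarrow> real) \<Rightarrow> real" where
  "transmission M R = (\<Prod>n\<le>M. 1 - (R n)\<^sup>2)"

lemma finite_late_paths: "finite (late_paths M)"
  by (rule finite_subset[OF _ finite_layer_set_ksum_le[of M "M + 2"]]) (auto simp: late_paths_def)

lemma early_path_last_zero:
  assumes "k \<in> layer_set (Suc M)" "ksum (Suc M) k \<le> M + 1"
  shows "k (Suc M) = 0"
  using layer_set_bottom_ksum(1)[OF assms(1)] assms(2) by fastforce

lemma extended_paths_at_cutoff: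
  "{k \<in> layer_set (Suc M). ksum (Suc M) k = M + 2} = insert (ones (Suc M)) (late_paths M)"
proof (intro set_eqI iffI)
  fix k assume k: "k \<in> {k \<in> layer_set (Suc M). ksum (Suc M) k = M + 2}"
  show "k \<in> insert (ones (Suc M)) (late_paths M)"
  proof (cases "k (Suc M) = 0")
    case True
    then show ?thesis
      using k layer_set_Suc_last_zero[of k M] ksum_Suc[of M k] by (simp add: late_paths_def)
  next
    case False
    then have "k = ones (Suc M)" using k layer_set_bottom_ksum(2)[of k "Suc M"] by simp
    then show ?thesis by simp
  qed
next
  fix k assume "k \<in> insert (ones (Suc M)) (late_paths M)"
  then show "k \<in> {k \<in> layer_set (Suc M). ksum (Suc M) k = M + 2}"
    using ones_layer_set[of "Suc M"] ksum_ones[of "Suc M"] layer_set_Suc_last_zero[of k M]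
      ksum_Suc[of M k] by (auto simp: late_paths_def)
qed

lemma ones_not_late: "ones (Suc M) \<notin> late_paths M"
  using layer_set_Suc_last_zero[of "ones (Suc M)" M] by (auto simp: late_paths_def ones_def)

lemma extended_data_before_cutoff:
  assumes "0 < c" "t \<noteq> c * real (M + 2)"
  shows "model_data (Suc M) (\<lambda>_. c) (R(Suc M := r)) t = model_data M (\<lambda>_. c) R t"
proof -
  let ?arrivals = "\<lambda>N. {k \<in> layer_set N. ksum N k \<le> N + 1 \<and> c * real (ksum N k) = t}"
  have eq: "?arrivals (Suc M) = ?arrivals M"
  proof (intro set_eqI iffI)
    fix k assume k: "k \<in> ?arrivals (Suc M)"
    then have "ksum (Suc M) k \<noteq> M + 2" using assms by auto
    then have early: "ksum (Suc M) k \<le> M + 1" using k by simp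
    then have "k (Suc M) = 0" using k early_path_last_zero by blast
    then show "k \<in> ?arrivals M"
      using k early layer_set_Suc_last_zero[of k M] ksum_Suc[of M k] by simp
  next
    fix k assume k: "k \<in> ?arrivals M"
    then have "k (Suc M) = 0" using layer_set_Suc_last_zero[of k M] by blast
    then show "k \<in> ?arrivals (Suc M)" using k layer_set_Suc_last_zero[of k M] ksum_Suc[of M k] by simp
  qed
  have "amp (Suc M) (R(Suc M := r)) k = amp M R k" if "k \<in> ?arrivals M" for k
    using that layer_set_Suc_last_zero[of k M] by (intro amp_extend) blast
  then show ?thesis
    unfolding model_data_const[OF assms(1)] eq by (rule sum.cong[OF refl])
qed

lemma data_at_cutoff:
  assumes "0 < c"
  shows "model_data M (\<lambda>_. c) R (c * real (M + 2)) = 0"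
proof -
  have "{k \<in> layer_set M. ksum M k \<le> M + 1 \<and> c * real (ksum M k) = c * real (M + 2)} = {}"
    using assms by auto
  then show ?thesis unfolding model_data_const[OF assms] by (simp only: sum.empty)
qed

lemma extended_data_at_cutoff:
  assumes "0 < c"
  shows "model_data (Suc M) (\<lambda>_. c) (R(Suc M := r)) (c * real (M + 2))
         = r * transmission M R + late_amplitude M R"
proof -
  have arrivals: "{k \<in> layer_set (Suc M). ksum (Suc M) k \<le> Suc M + 1 \<and>
                    c * real (ksum (Suc M) k) = c * real (M + 2)} = insert (ones (Suc M)) (late_paths M)"
    unfolding extended_paths_at_cutoff[symmetric] using assms by auto
  have "amp (Suc M) (R(Suc M := r)) (ones (Suc M)) = r * transmission M R"
    unfolding amp_ones transmission_def by simp
  moreover have "amp (Suc M) (R(Suc M := r)) k = amp M R k" if "k \<in> late_paths M" for k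
    using that layer_set_Suc_last_zero[of k M] by (intro amp_extend) (auto simp: late_paths_def)
  ultimately show ?thesis
    unfolding model_data_const[OF assms] arrivals late_amplitude_def
    by (simp add: sum.insert[OF finite_late_paths ones_not_late])
qed

lemma same_data_iff:
  assumes "0 < c"
  shows "model_data (Suc M) (\<lambda>_. c) (R(Suc M := r)) = model_data M (\<lambda>_. c) R
     \<longleftrightarrow> r * transmission M R + late_amplitude M R = 0"
proof
  assume "model_data (Suc M) (\<lambda>_. c) (R(Suc M := r)) = model_data M (\<lambda>_. c) R"
  then have "model_data (Suc M) (\<lambda>_. c) (R(Suc M := r)) (c * real (M + 2))
             = model_data M (\<lambda>_. c) R (c * real (M + 2))" by simp
  then show "r * transmission M R + late_amplitude M R = 0"
    unfolding extended_data_at_cutoff[OF assms] data_at_cutoff[OF assms] .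
next
  assume vanish: "r * transmission M R + late_amplitude M R = 0"
  show "model_data (Suc M) (\<lambda>_. c) (R(Suc M := r)) = model_data M (\<lambda>_. c) R"
  proof
    fix t
    show "model_data (Suc M) (\<lambda>_. c) (R(Suc M := r)) t = model_data M (\<lambda>_. c) R t"
    proof (cases "t = c * real (M + 2)")
      case True
      show ?thesis
        unfolding True extended_data_at_cutoff[OF assms] data_at_cutoff[OF assms] by (rule vanish)
    next
      case False
      then show ?thesis by (rule extended_data_before_cutoff[OF assms])
    qed
  qed
qed


lemma exists_small_root_iff:
  fixes P g :: real
  assumes "0 < P"
  shows "(\<exists>r. r \<noteq> 0 \<and> \<bar>r\<bar> < 1 \<and> r * P + g = 0) \<longleftrightarrow> 0 < \<bar>g\<bar> \<and> \<bar>g\<bar> < P"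
proof
  assume "\<exists>r. r \<noteq> 0 \<and> \<bar>r\<bar> < 1 \<and> r * P + g = 0"
  then obtain r where r: "r \<noteq> 0" "\<bar>r\<bar> < 1" "g = - (r * P)" by (metis add_eq_0_iff)
  have "\<bar>g\<bar> = \<bar>r\<bar> * P" using assms unfolding r(3) by (simp add: abs_mult)
  moreover have "\<bar>r\<bar> * P < P" using r(2) assms by simp
  ultimately show "0 < \<bar>g\<bar> \<and> \<bar>g\<bar> < P" using r(1) assms by simp
next
  assume g: "0 < \<bar>g\<bar> \<and> \<bar>g\<bar> < P"
  have "\<bar>- g / P\<bar> < 1" using g assms by (simp add: divide_less_eq)
  moreover have "- g / P * P + g = 0" using assms by simp
  ultimately show "\<exists>r. r \<noteq> 0 \<and> \<bar>r\<bar> < 1 \<and> r * P + g = 0"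
    using g assms by (intro exI[of _ "- g / P"]) auto
qed

lemma transmission_pos: "(\<And>n. n \<le> M \<Longrightarrow> \<bar>R n\<bar> < 1) \<Longrightarrow> 0 < transmission M R"
  unfolding transmission_def by (intro prod_pos) (simp add: abs_square_less_1)

definition extendable :: "nat \<Rightarrow> (nat \<Rightarrow> real) \<Rightarrow> bool" where
  "extendable M R \<longleftrightarrow> (\<forall>n\<le>M. \<bar>R n\<bar> < 1) \<and>
     0 < \<bar>late_amplitude M R\<bar> \<and> \<bar>late_amplitude M R\<bar> < transmission M R"

lemma exists_same_data_extension_iff:
  assumes "0 < c"
  shows "(\<forall>n\<le>M. \<bar>R n\<bar> < 1) \<and> (\<exists>r. r \<noteq> 0 \<and> \<bar>r\<bar> < 1 \<and>
           model_data (Suc M) (\<lambda>_. c) (R(Suc M := r)) = model_data M (\<lambda>_. c) R)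
         \<longleftrightarrow> extendable M R"
  unfolding same_data_iff[OF assms] extendable_def
  using exists_small_root_iff[OF transmission_pos] by blast

lemma extendable_cong: "(\<And>n. n \<le> M \<Longrightarrow> R n = R' n) \<Longrightarrow> extendable M R = extendable M R'"
proof -
  assume eq: "\<And>n. n \<le> M \<Longrightarrow> R n = R' n"
  have "late_amplitude M R = late_amplitude M R'"
    unfolding late_amplitude_def using amp_cong[OF eq] by simp
  moreover have "transmission M R = transmission M R'"
    unfolding transmission_def using eq by simp
  ultimately show ?thesis unfolding extendable_def using eq by simp
qed

(* Both quantities are polynomials in finitely many coordinates, hence continuous in the
   product topology and Borel measurable. *)
lemma continuous_late_amplitude: "continuous_on UNIV (late_amplitude M)"
  unfolding late_amplitude_def amp_def
  by (intro continuous_intros continuous_on_product_coordinates)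

lemma continuous_transmission: "continuous_on UNIV (transmission M)"
  unfolding transmission_def by (intro continuous_intros continuous_on_product_coordinates)

lemma open_extendable: "open {R. extendable M R}"
proof -
  have "{R. extendable M R} = (\<Inter>n\<in>{..M}. {R. \<bar>R n\<bar> < 1}) \<inter> {R. 0 < \<bar>late_amplitude M R\<bar>}
          \<inter> {R. \<bar>late_amplitude M R\<bar> < transmission M R}"
    unfolding extendable_def by auto
  also have "open \<dots>"
  proof (intro open_Int)
    show "open (\<Inter>n\<in>{..M}. {R :: nat \<Rightarrow> real. \<bar>R n\<bar> < 1})"
      by (intro open_INT finite_atMost ballI open_Collect_less continuous_intros
          continuous_on_product_coordinates)
    show "open {R. 0 < \<bar>late_amplitude M R\<bar>}" "open {R. \<bar>late_amplitude M R\<bar> < transmission M R}"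
      by (intro open_Collect_less continuous_intros continuous_late_amplitude continuous_transmission)+
  qed
  finally show ?thesis .
qed

lemma measurable_extendable [measurable]:
  "Measurable.pred (Pi\<^sub>M {..M} (\<lambda>_. lborel)) (extendable M)"
  unfolding extendable_def late_amplitude_def amp_def transmission_def by measurable


(* R = (1/2, 1/2, 0, ..., 0): every late path other than k* turns back at a layer with R_m = 0. *)
definition witness :: "nat \<Rightarrow> real" where
  "witness = (\<lambda>n. if n \<le> 1 then 1/2 else 0)"

lemma kstar_late: "1 \<le> M \<Longrightarrow> kstar M \<in> late_paths M"
  unfolding late_paths_def layer_set_def ksum_def kstar_def
  by (auto simp: sum.atMost_shift simp del: sum.atMost_Suc)

lemma late_path_turning_layer:
  assumes "k \<in> late_paths M" "k \<noteq> kstar M" "1 \<le> M"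
  obtains m where "2 \<le> m" "m \<le> M" "0 < k m" "ktil M k m = 0"
proof -
  define S where "S = {n. 2 \<le> n \<and> n \<le> M \<and> 0 < k n}"
  have k: "k \<in> layer_set M" "ksum M k = M + 2" using assms(1) unfolding late_paths_def by auto
  have "S \<noteq> {}"
  proof
    assume "S = {}"
    then have zero: "k n = 0" if "2 \<le> n" for n
      using that k(1) unfolding S_def layer_set_def by (cases "n \<le> M") auto
    have "ksum M k = sum k {0, 1}"
      unfolding ksum_def by (rule sum.mono_neutral_right) (use assms(3) zero in auto)
    then have "k 1 = M + 1" using k unfolding layer_set_def by simp
    then have "k = kstar M" using zero k(1) unfolding layer_set_def kstar_def
      by (auto simp: fun_eq_iff)
    then show False using assms(2) by simp
  qed
  moreover have "finite S" unfolding S_def by auto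
  ultimately have m: "Max S \<in> S" by simp
  have "ktil M k (Max S) = 0"
  proof (cases "Max S < M")
    case True
    have "Suc (Max S) \<notin> S" using Max_ge[OF \<open>finite S\<close>, of "Suc (Max S)"] by auto
    then have "k (Suc (Max S)) = 0" using True m unfolding S_def by auto
    then show ?thesis using True by (simp add: ktil_def)
  next
    case False
    then show ?thesis by (simp add: ktil_def)
  qed
  then show ?thesis using m that unfolding S_def by blast
qed

lemma late_amplitude_witness:
  assumes "1 \<le> M"
  shows "late_amplitude M witness = (- (1/2)) ^ M * (3/4) * (1/2) ^ (M + 1)"
proof -
  have "amp M witness k = 0" if k: "k \<in> late_paths M - {kstar M}" for k
  proof -
    obtain m where "2 \<le> m" "m \<le> M" "0 < k m" "ktil M k m = 0"
      using late_path_turning_layer[of k M] k assms by blast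
    then show ?thesis by (intro amp_zero_at_turning_layer[of m]) (auto simp: witness_def)
  qed
  then have "late_amplitude M witness = amp M witness (kstar M)"
    unfolding late_amplitude_def using finite_late_paths kstar_late[OF assms]
    by (simp add: sum.remove)
  also have "\<dots> = (- (1/2)) ^ M * (3/4) * (1/2) ^ (M + 1)"
    unfolding amp_kstar[OF assms] by (simp add: witness_def power2_eq_square)
  finally show ?thesis .
qed

lemma transmission_witness: "1 \<le> M \<Longrightarrow> transmission M witness = 9/16"
proof -
  assume "1 \<le> M"
  then have "transmission M witness = (\<Prod>n\<in>{0,1}. 1 - (witness n)\<^sup>2)"
    unfolding transmission_def by (intro prod.mono_neutral_right) (auto simp: witness_def)
  then show ?thesis by (simp add: witness_def power2_eq_square)
qed

lemma extendable_witness: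
  assumes "1 \<le> M"
  shows "extendable M witness"
proof -
  have abs_g: "\<bar>late_amplitude M witness\<bar> = (1/2) ^ M * (3/4) * (1/2) ^ (M + 1)"
    unfolding late_amplitude_witness[OF assms] by (simp add: abs_mult power_abs)
  have "(1/2::real) ^ M * (3/4) * (1/2) ^ (M + 1) \<le> 1 * (3/4) * (1/2)"
    by (intro mult_mono) (auto simp: power_le_one)
  then have "0 < \<bar>late_amplitude M witness\<bar> \<and> \<bar>late_amplitude M witness\<bar> < transmission M witness"
    unfolding abs_g transmission_witness[OF assms] by simp
  then show ?thesis unfolding extendable_def by (simp add: witness_def)
qed


section \<open>Open sets have positive product Lebesgue measure\<close>

(* A measurable set A of the finite product of Lebesgue measures has positive measure if it
   contains every point that, extended by p outside I, lies in an open neighbourhood U of p: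
   it then contains a box around p. *)
lemma emeasure_PiM_lborel_open_pos:
  fixes U :: "('i \<Rightarrow> real) set"
  assumes "finite I" "open U" "p \<in> U" "A \<in> sets (Pi\<^sub>M I (\<lambda>_. lborel))"
    and contained: "\<And>R. R \<in> I \<rightarrow>\<^sub>E UNIV \<Longrightarrow> (\<lambda>i. if i \<in> I then R i else p i) \<in> U \<Longrightarrow> R \<in> A"
  shows "0 < emeasure (Pi\<^sub>M I (\<lambda>_. lborel)) A"
proof -
  obtain X where X: "p \<in> (\<Pi>\<^sub>E i\<in>UNIV. X i)" "\<forall>i. openin euclidean (X i)"
      "(\<Pi>\<^sub>E i\<in>UNIV. X i) \<subseteq> U"
    using product_topology_open_contains_basis[OF assms(2)[unfolded open_fun_def] assms(3)]
    by (elim exE conjE) (rule that; assumption)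
  have "\<exists>e>0. ball (p i) e \<subseteq> X i" for i
  proof -
    have "open (X i)" using X(2) by simp
    moreover have "p i \<in> X i" using PiE_mem[OF X(1) UNIV_I] .
    ultimately show ?thesis using open_contains_ball by blast
  qed
  then obtain e where e: "\<And>i. 0 < e i" "\<And>i. ball (p i) (e i) \<subseteq> X i" by metis
  define B where "B = (\<Pi>\<^sub>E i\<in>I. {p i - e i <..< p i + e i})"
  have "B \<subseteq> A"
  proof
    fix R assume R: "R \<in> B"
    have "R i \<in> X i" if "i \<in> I" for i
    proof -
      have "R i \<in> {p i - e i <..< p i + e i}" using PiE_mem[OF R[unfolded B_def] that] .
      then have "R i \<in> ball (p i) (e i)" by (simp add: dist_real_def abs_less_iff)
      then show ?thesis by (rule subsetD[OF e(2)])
    qed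
    then have "(\<lambda>i. if i \<in> I then R i else p i) \<in> (\<Pi>\<^sub>E i\<in>UNIV. X i)"
      using PiE_mem[OF X(1)] by (intro PiE_I) auto
    then have "(\<lambda>i. if i \<in> I then R i else p i) \<in> U" using X(3) by blast
    moreover have "R \<in> I \<rightarrow>\<^sub>E UNIV" using R unfolding B_def by (simp add: PiE_iff)
    ultimately show "R \<in> A" using contained by blast
  qed
  interpret product_sigma_finite "\<lambda>_. lborel :: real measure" by standard
  have "emeasure (Pi\<^sub>M I (\<lambda>_. lborel)) B = (\<Prod>i\<in>I. emeasure lborel {p i - e i <..< p i + e i})"
    unfolding B_def using assms(1) by (intro emeasure_PiM) auto
  also have "\<dots> = ennreal (\<Prod>i\<in>I. 2 * e i)"
    using e(1) by (simp add: less_imp_le prod_ennreal)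
  finally have "0 < emeasure (Pi\<^sub>M I (\<lambda>_. lborel)) B"
    using e(1) by (simp add: prod_pos)
  also have "\<dots> \<le> emeasure (Pi\<^sub>M I (\<lambda>_. lborel)) A"
    using \<open>B \<subseteq> A\<close> assms(4) by (rule emeasure_mono)
  finally show ?thesis .
qed


theorem theorem3p2:
  fixes M :: nat and c :: real
  assumes "1 \<le> M" and "0 < c"
  defines "\<RR> \<equiv> {R \<in> {..M} \<rightarrow>\<^sub>E (UNIV :: real set).
      (\<forall>n\<le>M. \<bar>R n\<bar> < 1) \<and>
      (\<exists>r. r \<noteq> 0 \<and> \<bar>r\<bar> < 1 \<and>
           model_data (Suc M) (\<lambda>_. c) (R(Suc M := r)) = model_data M (\<lambda>_. c) R)}"
  shows "\<RR> \<in> sets (completion (Pi\<^sub>M {..M} (\<lambda>_. lborel))) \<and>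
         0 < emeasure (completion (Pi\<^sub>M {..M} (\<lambda>_. lborel))) \<RR>"
proof -
  let ?P = "Pi\<^sub>M {..M} (\<lambda>_. lborel :: real measure)"
  have char: "\<RR> = {R \<in> space ?P. extendable M R}"
    unfolding \<RR>_def using exists_same_data_extension_iff[OF assms(2)] by (auto simp: space_PiM)
  have meas: "\<RR> \<in> sets ?P"
    unfolding char by measurable
  have "0 < emeasure ?P \<RR>"
  proof (rule emeasure_PiM_lborel_open_pos[OF finite_atMost open_extendable _ meas])
    show "witness \<in> {R. extendable M R}"
      using extendable_witness[OF assms(1)] by simp
    fix R assume "R \<in> {..M} \<rightarrow>\<^sub>E UNIV" "(\<lambda>i. if i \<in> {..M} then R i else witness i) \<in> {R. extendable M R}"
    then show "R \<in> \<RR>"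
      unfolding char using extendable_cong[of M R "\<lambda>i. if i \<in> {..M} then R i else witness i"]
      by (auto simp: space_PiM)
  qed
  then show ?thesis using meas by simp
qed

end
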